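(* Let $a_0,a_1,\ldots\in\mathbb{R}$ satisfy $\sum_{j=0}^\infty|a_j|<\infty$. Then the series $f(x)=\sum_{j=0}^\infty 2^{j-1}a_jQ_j(x)$ converges absolutely for every $x\in[-1,1]$, and for every integer $D\ge1$, \[ \Big(\frac12\sum_{k=D}^\infty\frac{a_k^2}{k}\Big)^{1/2}\le \inf_{p\in\mathcal{P}_{D-1}}\ \sup_{x\in[-1,1]}|p(x)-f(x)|\le\sum_{j=D}^\infty|a_j|. \]
   Context: $\mathcal{P}_d$ denotes the set of real polynomials in one variable of degree at most $d$. The monic Chebyshev polynomials $Q_d\in\mathcal{P}_d$ are defined by $Q_0(x)=1$ and, for $d\ge1$, by the requirement $Q_d(\cos\theta)=2^{1-d}\cos(d\theta)$ for all $\theta\in[0,2\pi]$. *)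

theory Defs
  imports "HOL-Analysis.Analysis" "HOL-Computational_Algebra.Polynomial"
begin

definition chebQ :: "nat \<Rightarrow> real poly" where
  "chebQ d = (if d = 0 then 1 else
     (THE p. degree p \<le> d \<and> (\<forall>\<theta>\<in>{0..2*pi}. poly p (cos \<theta>) = 2 powr (1 - real d) * cos (real d * \<theta>))))"

end

theory Submission
  imports Defs
begin

text \<open>Let T_j be the Chebyshev polynomials of the first kind, T_j(cos t) = cos(j t). Since
  2^(j-1) Q_j = T_j for j \<ge> 1, the function f is the Chebyshev series a_0/2 + \<Sum>_{j\<ge>1} a_j T_j,
  and |T_j| \<le> 1 on [-1,1]; this gives absolute convergence, and truncating the series after degree
  D - 1 gives the upper bound. For the lower bound substitute x = cos t: for deg p < D the function
  p(cos t) is orthogonal on [-pi,pi] to cos(k t) for all k \<ge> D, so by Bessel's inequality the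
  L^2 mass pi \<Sum>_{k\<ge>D} a_k^2 of the tail is at most 2 pi sup|p - f|^2. This is even stronger than
  claimed, as 1/k \<le> 1.\<close>

fun chebT :: "nat \<Rightarrow> real poly" where
  "chebT 0 = 1"
| "chebT (Suc 0) = [:0, 1:]"
| "chebT (Suc (Suc n)) = [:0, 2:] * chebT (Suc n) - chebT n"

lemma poly_chebT_cos: "poly (chebT n) (cos t) = cos (real n * t)"
proof (induction n rule: chebT.induct)
  case (3 n)
  have "cos (real (Suc (Suc n)) * t) + cos (real n * t) = 2 * cos t * cos (real (Suc n) * t)"
    using cos_add[of "real (Suc n) * t" t] cos_diff[of "real (Suc n) * t" t]
    by (simp add: algebra_simps)
  with 3 show ?case by simp
qed auto

lemma degree_chebT_le: "degree (chebT n) \<le> n"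
proof (induction n rule: chebT.induct)
  case (3 n)
  have "degree ([:0, 2:] * chebT (Suc n)) \<le> Suc (Suc n)"
    using degree_mult_le[of "[:0, 2:]" "chebT (Suc n)"] 3 by simp
  with 3 show ?case by (simp add: degree_diff_le)
qed auto

lemma abs_poly_chebT_le_1: "x \<in> {-1..1} \<Longrightarrow> \<bar>poly (chebT n) x\<bar> \<le> 1"
  using poly_chebT_cos[of n "arccos x"] by simp

lemma poly_eq_0_if_roots_infinite:
  fixes p :: "'a::idom poly"
  assumes "infinite S" and "\<And>x. x \<in> S \<Longrightarrow> poly p x = 0"
  shows "p = 0"
  using assms poly_roots_finite finite_subset[of S "{x. poly p x = 0}"] by blast

lemma chebQ_eq_smult_chebT:
  assumes "d \<ge> 1"
  shows "chebQ d = smult (2 powr (1 - real d)) (chebT d)"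
proof -
  let ?c = "2 powr (1 - real d)"
  have "q = smult ?c (chebT d)"
    if "\<forall>\<theta>\<in>{0..2*pi}. poly q (cos \<theta>) = ?c * cos (real d * \<theta>)" for q
  proof -
    have "q - smult ?c (chebT d) = 0"
    proof (rule poly_eq_0_if_roots_infinite)
      fix x :: real assume x: "x \<in> {-1..1}"
      then have "arccos x \<in> {0..2*pi}" using arccos_bounded[of x] by auto
      then have "poly q x = ?c * cos (real d * arccos x)"
        using that \<open>arccos x \<in> _\<close> x cos_arccos[of x] by force
      then show "poly (q - smult ?c (chebT d)) x = 0"
        using poly_chebT_cos[of d "arccos x"] x by simp
    qed simp
    then show ?thesis by simp
  qed
  moreover have "degree (smult ?c (chebT d)) \<le> d"
    using degree_chebT_le[of d] by simp
  ultimately show ?thesis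
    using assms unfolding chebQ_def by (auto intro!: the_equality simp: poly_chebT_cos)
qed

lemma chebQ_series_term:
  "2 powr (real j - 1) * a * poly (chebQ j) x = (if j = 0 then a / 2 else a) * poly (chebT j) x"
proof (cases "j = 0")
  case True
  then show ?thesis by (simp add: chebQ_def powr_minus_divide)
next
  case False
  then have "2 powr (real j - 1) * 2 powr (1 - real j) = (1::real)"
    by (simp add: powr_add[symmetric])
  with False show ?thesis by (simp add: chebQ_eq_smult_chebT)
qed

lemma has_integral_cos_mult_cos:
  "((\<lambda>t. cos (real j * t) * cos (real k * t)) has_integral
     (if j = k then (if j = 0 then 2 * pi else pi) else 0)) {-pi..pi}"
proof -
  have product_to_sum: "cos (real j * t) * cos (real k * t) =
     (cos (real_of_int (int j - int k) * t) + cos (real_of_int (int j + int k) * t)) / 2" for t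
    using cos_diff[of "real j * t" "real k * t"] cos_add[of "real j * t" "real k * t"]
    by (simp add: algebra_simps)
  have "((\<lambda>t. (cos (real_of_int (int j - int k) * t) + cos (real_of_int (int j + int k) * t)) / 2)
     has_integral (((if int j - int k = 0 then 2 * pi else 0)
                    + (if int j + int k = 0 then 2 * pi else 0)) / 2)) {-pi..pi}"
    by (intro has_integral_divide has_integral_add has_integral_cos_nx)
  then show ?thesis
    unfolding product_to_sum by (rule has_integral_eq_rhs) auto
qed

lemma has_integral_cos_power_mult_cos:
  "m < k \<Longrightarrow> ((\<lambda>t. cos t ^ m * cos (real k * t)) has_integral 0) {-pi..pi}"
proof (induction m arbitrary: k)
  case 0
  then show ?case using has_integral_cos_mult_cos[of 0 k] by simp
next
  case (Suc m)
  then obtain k' where k': "k = Suc k'" and "m < k'" by (cases k) auto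
  have "cos t ^ Suc m * cos (real k * t) =
      cos t ^ m * cos (real (Suc k) * t) / 2 + cos t ^ m * cos (real k' * t) / 2" for t
  proof -
    have "cos t * cos (real k * t) = (cos (real (Suc k) * t) + cos (real k' * t)) / 2"
      using cos_add[of "real k * t" t] cos_diff[of "real k * t" t] k'
      by (simp add: algebra_simps)
    then have "cos t ^ m * (cos t * cos (real k * t)) =
        cos t ^ m * cos (real (Suc k) * t) / 2 + cos t ^ m * cos (real k' * t) / 2"
      by (simp add: distrib_left add_divide_distrib)
    then show ?thesis by (simp add: ac_simps)
  qed
  moreover have "((\<lambda>t. cos t ^ m * cos (real (Suc k) * t) / 2 + cos t ^ m * cos (real k' * t) / 2)
      has_integral (0 / 2 + 0 / 2)) {-pi..pi}"
    using Suc \<open>m < k'\<close> by (intro has_integral_add has_integral_divide Suc.IH) auto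
  ultimately show ?case by simp
qed

lemma has_integral_poly_cos_mult_cos:
  "degree p < k \<Longrightarrow> ((\<lambda>t. poly p (cos t) * cos (real k * t)) has_integral 0) {-pi..pi}"
proof -
  assume "degree p < k"
  then have "((\<lambda>t. \<Sum>i\<le>degree p. coeff p i * (cos t ^ i * cos (real k * t)))
      has_integral (\<Sum>i\<le>degree p. coeff p i * 0)) {-pi..pi}"
    by (intro has_integral_sum has_integral_mult_right has_integral_cos_power_mult_cos) auto
  then show ?thesis by (simp add: poly_altdef sum_distrib_right mult.assoc)
qed

lemma has_integral_cos_sum_square:
  fixes f :: "nat \<Rightarrow> nat"
  assumes "inj_on f {..<n}" and "\<And>k. f k \<noteq> 0"
  shows "((\<lambda>t. (\<Sum>k<n. b k * cos (real (f k) * t))\<^sup>2) has_integral (pi * (\<Sum>k<n. (b k)\<^sup>2)))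
           {-pi..pi}"
proof -
  have "((\<lambda>t. \<Sum>j<n. \<Sum>k<n. b j * b k * (cos (real (f j) * t) * cos (real (f k) * t)))
      has_integral (\<Sum>j<n. \<Sum>k<n. b j * b k *
        (if f j = f k then (if f j = 0 then 2 * pi else pi) else 0))) {-pi..pi}"
    by (intro has_integral_sum has_integral_mult_right has_integral_cos_mult_cos) auto
  moreover have "(\<Sum>j<n. \<Sum>k<n. b j * b k *
        (if f j = f k then (if f j = 0 then 2 * pi else pi) else 0))
      = pi * (\<Sum>k<n. (b k)\<^sup>2)"
  proof -
    have "(\<Sum>j<n. \<Sum>k<n. b j * b k *
        (if f j = f k then (if f j = 0 then 2 * pi else pi) else 0))
      = (\<Sum>j<n. \<Sum>k<n. if j = k then b j * b k * pi else 0)"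
      using assms(1) by (intro sum.cong refl) (auto dest: inj_onD simp: assms(2))
    then show ?thesis by (simp add: power2_eq_square sum_distrib_left ac_simps)
  qed
  moreover have "(\<Sum>k<n. b k * cos (real (f k) * t))\<^sup>2
      = (\<Sum>j<n. \<Sum>k<n. b j * b k * (cos (real (f j) * t) * cos (real (f k) * t)))" for t
    by (simp add: power2_eq_square sum_product ac_simps)
  ultimately show ?thesis by simp
qed

lemma sum_square_le_of_poly_cos_approx:
  fixes R :: "real poly"
  assumes deg: "degree R < D"
    and approx: "\<And>t. \<bar>poly R (cos t) - (\<Sum>k<n. b k * cos (real (k + D) * t))\<bar> \<le> M"
  shows "(\<Sum>k<n. (b k)\<^sup>2) \<le> 2 * M\<^sup>2"
proof -
  define r where "r t = poly R (cos t)" for t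
  define s where "s t = (\<Sum>k<n. b k * cos (real (k + D) * t))" for t
  have "((\<lambda>t. \<Sum>k<n. b k * (r t * cos (real (k + D) * t))) has_integral (\<Sum>k<n. b k * 0))
      {-pi..pi}"
    unfolding r_def using deg
    by (intro has_integral_sum has_integral_mult_right has_integral_poly_cos_mult_cos) auto
  then have rs: "((\<lambda>t. r t * s t) has_integral 0) {-pi..pi}"
    unfolding s_def by (simp add: sum_distrib_left ac_simps)
  have ss: "((\<lambda>t. (s t)\<^sup>2) has_integral (pi * (\<Sum>k<n. (b k)\<^sup>2))) {-pi..pi}"
    unfolding s_def using deg by (intro has_integral_cos_sum_square) (auto intro: inj_onI)
  have "continuous_on {-pi..pi} (\<lambda>t. (r t)\<^sup>2)"
    unfolding r_def by (intro continuous_intros)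
  then obtain I where rr: "((\<lambda>t. (r t)\<^sup>2) has_integral I) {-pi..pi}"
    using integrable_continuous_real integrable_on_def by blast
  have expand: "((\<lambda>t. (r t)\<^sup>2 - 2 * (r t * s t) + (s t)\<^sup>2) has_integral (I - 2 * 0 + pi * (\<Sum>k<n. (b k)\<^sup>2)))
      {-pi..pi}"
    by (intro has_integral_add has_integral_diff has_integral_mult_right rr rs ss)
  moreover have "((\<lambda>t. M\<^sup>2) has_integral (2 * pi * M\<^sup>2)) {-pi..pi}"
    using has_integral_const_real[of "M\<^sup>2" "-pi" pi] by simp
  moreover have "(r t)\<^sup>2 - 2 * (r t * s t) + (s t)\<^sup>2 \<le> M\<^sup>2" for t
  proof -
    have "\<bar>r t - s t\<bar>\<^sup>2 \<le> M\<^sup>2"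
      using approx[of t] unfolding r_def s_def by (intro power_mono) auto
    then show ?thesis by (simp add: power2_diff)
  qed
  ultimately have "I - 2 * 0 + pi * (\<Sum>k<n. (b k)\<^sup>2) \<le> 2 * pi * M\<^sup>2"
    by (rule has_integral_le)
  moreover have "0 \<le> I"
    using has_integral_nonneg[OF rr] by simp
  ultimately have "pi * (\<Sum>k<n. (b k)\<^sup>2) \<le> pi * (2 * M\<^sup>2)"
    by linarith
  then show ?thesis
    by (simp add: mult_le_cancel_left_pos)
qed

lemma summable_abs_mult_bounded:
  fixes c u :: "nat \<Rightarrow> real"
  assumes "summable (\<lambda>j. \<bar>c j\<bar>)" and "\<And>j. \<bar>u j\<bar> \<le> 1"
  shows "summable (\<lambda>j. \<bar>c j * u j\<bar>)"
  using assms(1) by (rule summable_comparison_test')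
    (use assms(2) in \<open>auto simp: abs_mult intro: mult_left_le\<close>)

lemma abs_suminf_mult_bounded_le:
  fixes c u :: "nat \<Rightarrow> real"
  assumes "summable (\<lambda>j. \<bar>c j\<bar>)" and "\<And>j. \<bar>u j\<bar> \<le> 1"
  shows "\<bar>\<Sum>j. c j * u j\<bar> \<le> (\<Sum>j. \<bar>c j\<bar>)"
proof -
  have "\<bar>\<Sum>j. c j * u j\<bar> \<le> (\<Sum>j. \<bar>c j * u j\<bar>)"
    by (rule summable_rabs[OF summable_abs_mult_bounded[OF assms]])
  also have "\<dots> \<le> (\<Sum>j. \<bar>c j\<bar>)"
    using summable_abs_mult_bounded[OF assms] assms
    by (intro suminf_le) (auto simp: abs_mult intro: mult_left_le)
  finally show ?thesis .
qed

lemma summable_square_if_summable_abs: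
  fixes c :: "nat \<Rightarrow> real"
  assumes "summable (\<lambda>j. \<bar>c j\<bar>)"
  shows "summable (\<lambda>j. (c j)\<^sup>2)"
proof (rule summable_comparison_test')
  show "summable (\<lambda>j. (\<Sum>i. \<bar>c i\<bar>) * \<bar>c j\<bar>)"
    using assms by (rule summable_mult)
  fix j
  have "\<bar>c j\<bar> \<le> (\<Sum>i. \<bar>c i\<bar>)"
    using sum_le_suminf[OF assms, of "{j}"] by simp
  then have "\<bar>c j\<bar> * \<bar>c j\<bar> \<le> (\<Sum>i. \<bar>c i\<bar>) * \<bar>c j\<bar>"
    by (rule mult_right_mono) simp
  then show "norm ((c j)\<^sup>2) \<le> (\<Sum>i. \<bar>c i\<bar>) * \<bar>c j\<bar>"
    by (simp add: power2_eq_square abs_mult)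
qed

lemma suminf_divide_index_le:
  fixes b :: "nat \<Rightarrow> real"
  assumes "summable b" and "\<And>k. 0 \<le> b k" and "D \<ge> 1"
  shows "(\<Sum>k. b k / real (k + D)) \<le> (\<Sum>k. b k)"
proof -
  have le: "b k / real (k + D) \<le> b k" for k
    using assms(2)[of k] assms(3) by (simp add: divide_le_eq mult_le_cancel_left1)
  moreover have "summable (\<lambda>k. b k / real (k + D))"
    using assms(1) by (rule summable_comparison_test') (use le assms(2) in simp)
  ultimately show ?thesis
    using assms(1) by (rule suminf_le)
qed

definition cheb_trunc :: "(nat \<Rightarrow> real) \<Rightarrow> nat \<Rightarrow> real poly" where
  "cheb_trunc c D = (\<Sum>j<D. smult (c j) (chebT j))"

lemma degree_cheb_trunc_le: "degree (cheb_trunc c D) \<le> D - 1"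
  unfolding cheb_trunc_def
proof (rule degree_sum_le)
  fix j assume "j \<in> {..<D}"
  then show "degree (smult (c j) (chebT j)) \<le> D - 1"
    using degree_chebT_le[of j] by auto
qed simp

lemma poly_cheb_trunc: "poly (cheb_trunc c D) x = (\<Sum>j<D. c j * poly (chebT j) x)"
  by (simp add: cheb_trunc_def poly_sum)

lemma cheb_trunc_add: "cheb_trunc c (n + D) = cheb_trunc c D + (\<Sum>k<n. smult (c (k + D)) (chebT (k + D)))"
  unfolding cheb_trunc_def by (induction n) (simp_all add: ac_simps)

lemma summable_abs_cheb_series:
  assumes "summable (\<lambda>j. \<bar>c j\<bar>)" and "x \<in> {-1..1}"
  shows "summable (\<lambda>j. \<bar>c j * poly (chebT j) x\<bar>)"
  using assms by (intro summable_abs_mult_bounded abs_poly_chebT_le_1)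

lemma cheb_series_minus_trunc:
  assumes "summable (\<lambda>j. \<bar>c j\<bar>)" and "x \<in> {-1..1}"
  shows "(\<Sum>j. c j * poly (chebT j) x) - poly (cheb_trunc c D) x
           = (\<Sum>j. c (j + D) * poly (chebT (j + D)) x)"
  using suminf_split_initial_segment[OF summable_rabs_cancel[OF summable_abs_cheb_series[OF assms]], of D]
  by (simp add: poly_cheb_trunc)

lemma abs_cheb_series_minus_trunc_le:
  assumes "summable (\<lambda>j. \<bar>c j\<bar>)" and "x \<in> {-1..1}"
  shows "\<bar>(\<Sum>j. c j * poly (chebT j) x) - poly (cheb_trunc c D) x\<bar> \<le> (\<Sum>j. \<bar>c (j + D)\<bar>)"
  unfolding cheb_series_minus_trunc[OF assms]
  using assms summable_iff_shift[of "\<lambda>j. \<bar>c j\<bar>" D]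
  by (intro abs_suminf_mult_bounded_le abs_poly_chebT_le_1) auto

lemma sum_square_cheb_tail_le:
  fixes p :: "real poly" and c :: "nat \<Rightarrow> real"
  assumes c: "summable (\<lambda>j. \<bar>c j\<bar>)" and deg: "degree p < D"
    and approx: "\<And>x. x \<in> {-1..1} \<Longrightarrow> \<bar>poly p x - (\<Sum>j. c j * poly (chebT j) x)\<bar> \<le> M"
  shows "(\<Sum>k. (c (k + D))\<^sup>2) \<le> 2 * M\<^sup>2"
proof -
  define F where "F x = (\<Sum>j. c j * poly (chebT j) x)" for x
  define R where "R = p - cheb_trunc c D"
  define eps where "eps n = (\<Sum>j. \<bar>c (j + (n + D))\<bar>)" for n
  have "degree R \<le> D - 1"
    unfolding R_def using deg degree_cheb_trunc_le[of c D] by (intro degree_diff_le) auto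
  then have deg_R: "degree R < D"
    using deg by linarith
  have partial: "(\<Sum>k<n. (c (k + D))\<^sup>2) \<le> 2 * (M + eps n)\<^sup>2" for n
  proof (rule sum_square_le_of_poly_cos_approx[OF deg_R])
    fix t :: real
    have x: "cos t \<in> {-1..1}" by simp
    have "poly R (cos t) - (\<Sum>k<n. c (k + D) * cos (real (k + D) * t))
        = (poly p (cos t) - F (cos t)) + (F (cos t) - poly (cheb_trunc c (n + D)) (cos t))"
      by (simp add: R_def cheb_trunc_add poly_sum poly_chebT_cos)
    moreover have "\<bar>poly p (cos t) - F (cos t)\<bar> \<le> M"
      unfolding F_def by (rule approx[OF x])
    moreover have "\<bar>F (cos t) - poly (cheb_trunc c (n + D)) (cos t)\<bar> \<le> eps n"
      unfolding F_def eps_def by (rule abs_cheb_series_minus_trunc_le[OF c x])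
    ultimately show "\<bar>poly R (cos t) - (\<Sum>k<n. c (k + D) * cos (real (k + D) * t))\<bar> \<le> M + eps n"
      by linarith
  qed
  have "eps \<longlonglongrightarrow> 0"
    using LIMSEQ_ignore_initial_segment[OF suminf_exist_split2[OF c], of D]
    unfolding eps_def by simp
  then have "(\<lambda>n. 2 * (M + eps n)\<^sup>2) \<longlonglongrightarrow> 2 * (M + 0)\<^sup>2"
    by (intro tendsto_intros)
  moreover have "summable (\<lambda>k. (c (k + D))\<^sup>2)"
    using c summable_iff_shift[of "\<lambda>j. \<bar>c j\<bar>" D] by (intro summable_square_if_summable_abs) auto
  ultimately show ?thesis
    using LIMSEQ_le[OF summable_LIMSEQ] partial by fastforce
qed

definition poly_approx_error :: "nat \<Rightarrow> real set \<Rightarrow> (real \<Rightarrow> real) \<Rightarrow> real" where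
  "poly_approx_error d S f = (INF p\<in>{p. degree p \<le> d}. SUP x\<in>S. \<bar>poly p x - f x\<bar>)"

lemma bdd_above_abs_poly_minus:
  fixes f :: "real \<Rightarrow> real"
  assumes "compact S" and "\<And>x. x \<in> S \<Longrightarrow> \<bar>f x\<bar> \<le> B"
  shows "bdd_above ((\<lambda>x. \<bar>poly p x - f x\<bar>) ` S)"
proof -
  have "bounded (poly p ` S)"
    using assms(1) by (intro compact_imp_bounded compact_continuous_image continuous_intros)
  then obtain A where "\<And>x. x \<in> S \<Longrightarrow> \<bar>poly p x\<bar> \<le> A"
    unfolding bounded_real by blast
  then have "\<And>x. x \<in> S \<Longrightarrow> \<bar>poly p x - f x\<bar> \<le> A + B"
    using assms(2) abs_triangle_ineq4 by (meson add_mono order_trans)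
  then show ?thesis by (rule bdd_aboveI2)
qed

lemma poly_approx_error_le:
  assumes "compact S" "S \<noteq> {}" and "\<And>x. x \<in> S \<Longrightarrow> \<bar>f x\<bar> \<le> B"
    and "degree p \<le> d" and "\<And>x. x \<in> S \<Longrightarrow> \<bar>poly p x - f x\<bar> \<le> U"
  shows "poly_approx_error d S f \<le> U"
proof -
  have "0 \<le> (SUP x\<in>S. \<bar>poly q x - f x\<bar>)" for q
    using assms(2) bdd_above_abs_poly_minus[OF assms(1,3)]
    by (auto intro: cSUP_upper2)
  then have "poly_approx_error d S f \<le> (SUP x\<in>S. \<bar>poly p x - f x\<bar>)"
    unfolding poly_approx_error_def using assms(4) by (intro cINF_lower bdd_belowI2) auto
  also have "\<dots> \<le> U"
    using assms(2,5) by (rule cSUP_least)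
  finally show ?thesis .
qed

lemma le_poly_approx_error:
  assumes "compact S" and "\<And>x. x \<in> S \<Longrightarrow> \<bar>f x\<bar> \<le> B"
    and "\<And>p M. degree p \<le> d \<Longrightarrow> (\<And>x. x \<in> S \<Longrightarrow> \<bar>poly p x - f x\<bar> \<le> M) \<Longrightarrow> L \<le> M"
  shows "L \<le> poly_approx_error d S f"
  unfolding poly_approx_error_def
proof (rule cINF_greatest)
  show "{p. degree p \<le> d} \<noteq> {}"
    by (metis degree_0 empty_iff mem_Collect_eq zero_le)
  fix p :: "real poly" assume "p \<in> {p. degree p \<le> d}"
  then show "L \<le> (SUP x\<in>S. \<bar>poly p x - f x\<bar>)"
    using bdd_above_abs_poly_minus[OF assms(1,2)] by (intro assms(3)) (auto intro: cSUP_upper)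
qed

theorem proposition2p2:
  fixes a :: "nat \<Rightarrow> real"
  assumes "summable (\<lambda>j. \<bar>a j\<bar>)"
  shows "(\<forall>x\<in>{-1..1}. summable (\<lambda>j. \<bar>2 powr (real j - 1) * a j * poly (chebQ j) x\<bar>))
    \<and> (\<forall>D::nat. D \<ge> 1 \<longrightarrow>
         (let f = (\<lambda>x. \<Sum>j. 2 powr (real j - 1) * a j * poly (chebQ j) x);
              E = (INF p\<in>{p :: real poly. degree p \<le> D - 1}. SUP x\<in>{-1..1}. \<bar>poly p x - f x\<bar>)
          in sqrt ((1/2) * (\<Sum>k. (a (k + D))\<^sup>2 / real (k + D))) \<le> E
             \<and> E \<le> (\<Sum>k. \<bar>a (k + D)\<bar>)))"
proof -
  define c where "c j = (if j = 0 then a j / 2 else a j)" for j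
  define F where "F x = (\<Sum>j. c j * poly (chebT j) x)" for x
  have c: "summable (\<lambda>j. \<bar>c j\<bar>)"
    using assms by (rule summable_comparison_test') (simp add: c_def)
  have terms: "2 powr (real j - 1) * a j * poly (chebQ j) x = c j * poly (chebT j) x" for j x
    unfolding c_def by (rule chebQ_series_term)
  have f_eq: "(\<lambda>x. \<Sum>j. 2 powr (real j - 1) * a j * poly (chebQ j) x) = F"
    unfolding terms F_def ..
  have F_bound: "\<bar>F x\<bar> \<le> (\<Sum>j. \<bar>c j\<bar>)" if "x \<in> {-1..1}" for x
    unfolding F_def using c that by (intro abs_suminf_mult_bounded_le abs_poly_chebT_le_1)
  show ?thesis
    unfolding Let_def f_eq poly_approx_error_def[symmetric]
  proof (intro conjI ballI allI impI)
    show "summable (\<lambda>j. \<bar>2 powr (real j - 1) * a j * poly (chebQ j) x\<bar>)" if "x \<in> {-1..1}" for x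
      unfolding terms using c that by (rule summable_abs_cheb_series)
    fix D :: nat assume D: "D \<ge> 1"
    then have tail: "c (k + D) = a (k + D)" for k
      by (simp add: c_def)
    show "poly_approx_error (D - 1) {-1..1} F \<le> (\<Sum>k. \<bar>a (k + D)\<bar>)"
    proof (rule poly_approx_error_le[OF _ _ F_bound degree_cheb_trunc_le])
      fix x :: real assume "x \<in> {-1..1}"
      then show "\<bar>poly (cheb_trunc c D) x - F x\<bar> \<le> (\<Sum>k. \<bar>a (k + D)\<bar>)"
        using abs_cheb_series_minus_trunc_le[OF c, of x D] by (simp add: F_def tail abs_minus_commute)
    qed auto
    show "sqrt ((1/2) * (\<Sum>k. (a (k + D))\<^sup>2 / real (k + D))) \<le> poly_approx_error (D - 1) {-1..1} F"
    proof (rule le_poly_approx_error[OF _ F_bound])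
      fix p M assume "degree p \<le> D - 1" and approx: "\<And>x. x \<in> {-1..1} \<Longrightarrow> \<bar>poly p x - F x\<bar> \<le> M"
      then have "(\<Sum>k. (a (k + D))\<^sup>2) \<le> 2 * M\<^sup>2"
        using sum_square_cheb_tail_le[OF c, of p D M] D by (simp add: F_def tail)
      moreover have "(\<Sum>k. (a (k + D))\<^sup>2 / real (k + D)) \<le> (\<Sum>k. (a (k + D))\<^sup>2)"
        using assms summable_iff_shift[of "\<lambda>j. \<bar>a j\<bar>" D] D
        by (intro suminf_divide_index_le summable_square_if_summable_abs) auto
      moreover have "0 \<le> M"
        using approx[of 0] by simp
      ultimately show "sqrt ((1/2) * (\<Sum>k. (a (k + D))\<^sup>2 / real (k + D))) \<le> M"
        by (intro real_le_lsqrt) auto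
    qed simp
  qed
qed

end
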